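(* Let $X=\{1,\dots,n\}$, $Y$ finite, $Q$ a symmetric irreducible stochastic matrix on $Y$ (notation in context). Let $2\le k\le n-1$, let $\underline a=(a_0,\dots,a_m)$ be a type with $a_0+\cdots+a_m=k+1$ and $a_0\ge1$, $\underline a'=(a_0-1,a_1,\dots,a_m)$, $A\subseteq X$ with $|A|=k$, and $F\in P_{k,\underline a',A}$. Then $$D_{k+1,\underline a}D^*_{k+1,\underline a}F-D^*_{k,\underline a'}D_{k,\underline a'}F=|Y|\,(n+\ell(\underline a)-2k)\,F.$$
   Context: $Q$ acts on $L(Y)$ by $(Qf)(y)=\sum_{y'}q(y,y')f(y')$, with distinct eigenvalues $\lambda_0=1,\dots,\lambda_m$ and eigenspaces $W_0$ (constants), $W_1,\dots,W_m$. $\Theta_k$: functions $\theta$ with $\mathrm{dom}(\theta)$ a $k$-subset of $X$ and values in $Y$; $\varphi\subseteq\theta$ means $\mathrm{dom}\varphi\subseteq\mathrm{dom}\theta$ and $\theta|_{\mathrm{dom}\varphi}=\varphi$. $D_k:L(\Theta_k)\to L(\Theta_{k-1})$, $(D_kF)(\varphi)=\sum_{\theta\supseteq\varphi}F(\theta)$; $D_k^*:L(\Theta_{k-1})\to L(\Theta_k)$, $(D_k^*F)(\theta)=\sum_{\varphi\subseteq\theta}F(\varphi)$. Types $\underline b=(b_0,\dots,b_m)$ of nonnegative integers, $\ell(\underline b)=b_1+\cdots+b_m$, $\underline b'=(b_0-1,b_1,\dots,b_m)$. A fundamental function of type $\underline b$ on a $k$-set $A$ is $F=\bigotimes_{j\in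 A}F^j$ ($F(\theta)=\prod_{j\in A}F^j(\theta(j))$ on $Y^A$, $0$ elsewhere) with each $F^j$ in some $W_{i_j}$ and exactly $b_i$ indices with $i_j=i$; $P_{k,\underline b,A}$ is their span, $P_{k,\underline b}=\bigoplus_AP_{k,\underline b,A}$ ($\{0\}$ if an entry is negative). $D_{k,\underline b}$ is $D_k$ restricted to $P_{k,\underline b}$ and $D^*_{k,\underline b}$ is $D^*_k$ restricted to $P_{k-1,\underline b'}$. *)

theory Defs
  imports Complex_Main
begin

definition Qop :: "('y::finite \<Rightarrow> 'y \<Rightarrow> real) \<Rightarrow> ('y \<Rightarrow> real) \<Rightarrow> 'y \<Rightarrow> real" where
  "Qop Q f y = (\<Sum>y'\<in>UNIV. Q y y' * f y')"

definition symmetric_mat :: "('y \<Rightarrow> 'y \<Rightarrow> real) \<Rightarrow> bool" where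
  "symmetric_mat Q \<longleftrightarrow> (\<forall>x y. Q x y = Q y x)"

definition stochastic_mat :: "('y::finite \<Rightarrow> 'y \<Rightarrow> real) \<Rightarrow> bool" where
  "stochastic_mat Q \<longleftrightarrow> (\<forall>x y. Q x y \<ge> 0) \<and> (\<forall>x. (\<Sum>y\<in>UNIV. Q x y) = 1)"

definition irreducible_mat :: "('y \<Rightarrow> 'y \<Rightarrow> real) \<Rightarrow> bool" where
  "irreducible_mat Q \<longleftrightarrow> (\<forall>x y. (x, y) \<in> {(u, v). Q u v > 0}\<^sup>*)"

definition is_eigenvalue :: "('y::finite \<Rightarrow> 'y \<Rightarrow> real) \<Rightarrow> real \<Rightarrow> bool" where
  "is_eigenvalue Q c \<longleftrightarrow> (\<exists>f. f \<noteq> (\<lambda>_. 0) \<and> Qop Q f = (\<lambda>y. c * f y))"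

definition eigsp :: "('y::finite \<Rightarrow> 'y \<Rightarrow> real) \<Rightarrow> real \<Rightarrow> ('y \<Rightarrow> real) set" where
  "eigsp Q c = {f. Qop Q f = (\<lambda>y. c * f y)}"

definition Theta :: "nat \<Rightarrow> nat \<Rightarrow> (nat \<rightharpoonup> 'y) set" where
  "Theta n k = {\<theta>. dom \<theta> \<subseteq> {1..n} \<and> card (dom \<theta>) = k}"

definition Dop :: "nat \<Rightarrow> nat \<Rightarrow> ((nat \<rightharpoonup> 'y) \<Rightarrow> real) \<Rightarrow> (nat \<rightharpoonup> 'y) \<Rightarrow> real" where
  "Dop n k F \<phi> = (if \<phi> \<in> Theta n (k - 1)
      then (\<Sum>\<theta>\<in>{\<theta> \<in> Theta n k. \<phi> \<subseteq>\<^sub>m \<theta>}. F \<theta>) else 0)"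

definition Dstar :: "nat \<Rightarrow> nat \<Rightarrow> ((nat \<rightharpoonup> 'y) \<Rightarrow> real) \<Rightarrow> (nat \<rightharpoonup> 'y) \<Rightarrow> real" where
  "Dstar n k F \<theta> = (if \<theta> \<in> Theta n k
      then (\<Sum>\<phi>\<in>{\<phi> \<in> Theta n (k - 1). \<phi> \<subseteq>\<^sub>m \<theta>}. F \<phi>) else 0)"

definition tensor :: "nat set \<Rightarrow> (nat \<Rightarrow> 'y \<Rightarrow> real) \<Rightarrow> (nat \<rightharpoonup> 'y) \<Rightarrow> real" where
  "tensor A Fs \<theta> = (if dom \<theta> = A then (\<Prod>j\<in>A. Fs j (the (\<theta> j))) else 0)"

text \<open>Fundamental function of type b (b : {0..m} -> nat) on the set A, w.r.t.
  the enumeration lam 0 = 1, lam 1, ..., lam m of the distinct eigenvalues of Q.\<close>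
definition fundamental ::
  "('y::finite \<Rightarrow> 'y \<Rightarrow> real) \<Rightarrow> (nat \<Rightarrow> real) \<Rightarrow> nat \<Rightarrow> (nat \<Rightarrow> nat) \<Rightarrow> nat set
     \<Rightarrow> ((nat \<rightharpoonup> 'y) \<Rightarrow> real) \<Rightarrow> bool" where
  "fundamental Q lam m b A F \<longleftrightarrow>
     (\<exists>Fs idx. (\<forall>j\<in>A. idx j \<le> m \<and> Fs j \<in> eigsp Q (lam (idx j)))
        \<and> (\<forall>i\<le>m. card {j\<in>A. idx j = i} = b i)
        \<and> F = tensor A Fs)"

definition Pspace ::
  "('y::finite \<Rightarrow> 'y \<Rightarrow> real) \<Rightarrow> (nat \<Rightarrow> real) \<Rightarrow> nat \<Rightarrow> (nat \<Rightarrow> nat) \<Rightarrow> nat set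
     \<Rightarrow> ((nat \<rightharpoonup> 'y) \<Rightarrow> real) set" where
  "Pspace Q lam m b A = {F. \<exists>S c. finite S \<and> S \<subseteq> {G. fundamental Q lam m b A G}
        \<and> F = (\<lambda>\<theta>. \<Sum>G\<in>S. c G * G \<theta>)}"

definition ell :: "nat \<Rightarrow> (nat \<Rightarrow> nat) \<Rightarrow> nat" where
  "ell m b = (\<Sum>i\<in>{1..m}. b i)"

end

theory Submission
  imports Defs
begin

text \<open>
  At \<open>\<theta> \<in> \<Theta>\<^sub>k\<close>, the terms of \<open>D D\<^sup>* F\<close> that add a point \<open>x\<close> and remove it again give
  \<open>(n - k) |Y| F \<theta>\<close>; the terms that add \<open>x\<close> and remove some other \<open>j\<close> cancel exactly
  against the terms of \<open>D\<^sup>* D F\<close> that remove \<open>j\<close> and add \<open>x \<noteq> j\<close>. What remains is minus the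
  resampling sum \<open>\<Sum>\<^sub>j \<Sum>\<^sub>y F(\<theta>(j \<mapsto> y))\<close>. On a fundamental function, resampling the
  coordinate \<open>j\<close> replaces \<open>F\<^sup>j\<close> by its sum over \<open>Y\<close>: this is \<open>|Y| F\<^sup>j\<close> for the constant
  eigenfunctions (eigenvalue 1, by irreducibility) and \<open>0\<close> for all others, which are
  orthogonal to the constants since \<open>Q\<close> is symmetric. So the resampling sum is
  \<open>|Y| (a\<^sub>0 - 1) F\<close>.
\<close>

lemma Theta_finite_dom: "\<phi> \<in> Theta n k \<Longrightarrow> finite (dom \<phi>)"
  unfolding Theta_def using finite_subset by blast

lemma fun_upd_Some_in_Theta:
  assumes "\<phi> \<in> Theta n k" "x \<in> {1..n}" "x \<notin> dom \<phi>"
  shows "\<phi>(x \<mapsto> y) \<in> Theta n (Suc k)"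
  using assms Theta_finite_dom[OF assms(1)] by (auto simp: Theta_def)

lemma fun_upd_None_in_Theta:
  assumes "\<theta> \<in> Theta n (Suc k)" "j \<in> dom \<theta>"
  shows "\<theta>(j := None) \<in> Theta n k"
  using assms Theta_finite_dom[OF assms(1)] by (auto simp: Theta_def card_Diff_singleton)

lemma Theta_map_le_Suc:
  assumes \<phi>: "\<phi> \<in> Theta n k" and \<theta>: "\<theta> \<in> Theta n (Suc k)" and le: "\<phi> \<subseteq>\<^sub>m \<theta>"
  obtains x where "x \<in> {1..n}" "x \<in> dom \<theta>" "x \<notin> dom \<phi>"
    and "\<theta> = \<phi>(x \<mapsto> the (\<theta> x))" and "\<phi> = \<theta>(x := None)"
proof -
  have sub: "dom \<phi> \<subseteq> dom \<theta>"
    using le map_le_implies_dom_le by blast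
  have "card (dom \<theta> - dom \<phi>) = 1"
    using \<phi> \<theta> sub Theta_finite_dom[OF \<phi>] by (simp add: Theta_def card_Diff_subset)
  then obtain x where x: "dom \<theta> - dom \<phi> = {x}"
    using card_1_singletonE by blast
  have agree: "\<phi> z = \<theta> z" if "z \<noteq> x" for z
  proof (cases "z \<in> dom \<phi>")
    case True
    then show ?thesis using le by (auto simp: map_le_def)
  next
    case False
    then have "z \<notin> dom \<theta>" using x that by auto
    then show ?thesis using False by (simp add: domIff)
  qed
  show thesis
  proof
    show "x \<in> {1..n}" using x \<theta> unfolding Theta_def by blast
    show "x \<in> dom \<theta>" "x \<notin> dom \<phi>" using x by auto
    show "\<theta> = \<phi>(x \<mapsto> the (\<theta> x))" "\<phi> = \<theta>(x := None)"
      using agree \<open>x \<in> dom \<theta>\<close> \<open>x \<notin> dom \<phi>\<close> by (auto simp: fun_eq_iff)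
  qed
qed

lemma Theta_extensions:
  assumes "\<phi> \<in> Theta n k"
  shows "{\<theta> \<in> Theta n (Suc k). \<phi> \<subseteq>\<^sub>m \<theta>} = (\<lambda>(x, y). \<phi>(x \<mapsto> y)) ` (({1..n} - dom \<phi>) \<times> UNIV)"
proof (intro equalityI subsetI)
  fix \<theta> assume "\<theta> \<in> {\<theta> \<in> Theta n (Suc k). \<phi> \<subseteq>\<^sub>m \<theta>}"
  then have \<theta>: "\<theta> \<in> Theta n (Suc k)" and le: "\<phi> \<subseteq>\<^sub>m \<theta>" by auto
  obtain x where "x \<in> {1..n} - dom \<phi>" "\<theta> = \<phi>(x \<mapsto> the (\<theta> x))"
    using Theta_map_le_Suc[OF assms \<theta> le] by blast
  then show "\<theta> \<in> (\<lambda>(x, y). \<phi>(x \<mapsto> y)) ` (({1..n} - dom \<phi>) \<times> UNIV)"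
    by (intro rev_image_eqI[of "(x, the (\<theta> x))"]) auto
next
  fix \<theta> assume "\<theta> \<in> (\<lambda>(x, y). \<phi>(x \<mapsto> y)) ` (({1..n} - dom \<phi>) \<times> UNIV)"
  then obtain p where p: "p \<in> ({1..n} - dom \<phi>) \<times> UNIV" "\<theta> = (\<lambda>(x, y). \<phi>(x \<mapsto> y)) p"
    by blast
  obtain x y where "p = (x, y)" by fastforce
  with p have "x \<in> {1..n}" "x \<notin> dom \<phi>" "\<theta> = \<phi>(x \<mapsto> y)" by auto
  then show "\<theta> \<in> {\<theta> \<in> Theta n (Suc k). \<phi> \<subseteq>\<^sub>m \<theta>}"
    using fun_upd_Some_in_Theta[OF assms] by (auto simp: map_le_def)
qed

lemma Theta_restrictions:
  assumes "\<theta> \<in> Theta n (Suc k)"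
  shows "{\<phi> \<in> Theta n k. \<phi> \<subseteq>\<^sub>m \<theta>} = (\<lambda>j. \<theta>(j := None)) ` dom \<theta>"
proof (intro equalityI subsetI)
  fix \<phi> assume "\<phi> \<in> {\<phi> \<in> Theta n k. \<phi> \<subseteq>\<^sub>m \<theta>}"
  then have \<phi>: "\<phi> \<in> Theta n k" and le: "\<phi> \<subseteq>\<^sub>m \<theta>" by auto
  obtain j where "j \<in> dom \<theta>" "\<phi> = \<theta>(j := None)"
    using Theta_map_le_Suc[OF \<phi> assms le] by blast
  then show "\<phi> \<in> (\<lambda>j. \<theta>(j := None)) ` dom \<theta>" by blast
next
  fix \<phi> assume "\<phi> \<in> (\<lambda>j. \<theta>(j := None)) ` dom \<theta>"
  then show "\<phi> \<in> {\<phi> \<in> Theta n k. \<phi> \<subseteq>\<^sub>m \<theta>}"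
    using fun_upd_None_in_Theta[OF assms] by (auto simp: map_le_def split: if_splits)
qed

lemma inj_on_fun_upd_Some: "inj_on (\<lambda>(x, y). \<phi>(x \<mapsto> y)) ((S - dom \<phi>) \<times> UNIV)"
proof (rule inj_onI)
  fix p q assume "p \<in> (S - dom \<phi>) \<times> UNIV" "(\<lambda>(x, y). \<phi>(x \<mapsto> y)) p = (\<lambda>(x, y). \<phi>(x \<mapsto> y)) q"
  moreover obtain x y x' y' where "p = (x, y)" "q = (x', y')" by fastforce
  ultimately have "x \<notin> dom \<phi>" and eq: "\<phi>(x \<mapsto> y) = \<phi>(x' \<mapsto> y')" by auto
  then have "x = x'" by (metis domI fun_upd_other fun_upd_same)
  with eq have "y = y'" by (metis fun_upd_same option.inject)
  then show "p = q" using \<open>p = (x, y)\<close> \<open>q = (x', y')\<close> \<open>x = x'\<close> by simp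
qed

lemma inj_on_fun_upd_None: "inj_on (\<lambda>j. \<theta>(j := None)) (dom \<theta>)"
  by (rule inj_onI) (metis domIff fun_upd_apply)

lemma Dop_Suc_eq:
  assumes "\<phi> \<in> Theta n k"
  shows "Dop n (Suc k) F \<phi> = (\<Sum>x\<in>{1..n} - dom \<phi>. \<Sum>y\<in>UNIV. F (\<phi>(x \<mapsto> y)))"
  using assms unfolding Dop_def Theta_extensions[OF assms]
  by (subst sum.reindex[OF inj_on_fun_upd_Some]) (simp add: sum.cartesian_product case_prod_beta)

lemma Dstar_Suc_eq:
  assumes "\<theta> \<in> Theta n (Suc k)"
  shows "Dstar n (Suc k) F \<theta> = (\<Sum>j\<in>dom \<theta>. F (\<theta>(j := None)))"
  using assms by (simp add: Dstar_def Theta_restrictions sum.reindex[OF inj_on_fun_upd_None])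

definition resample_sum :: "((nat \<rightharpoonup> 'y::finite) \<Rightarrow> real) \<Rightarrow> (nat \<rightharpoonup> 'y) \<Rightarrow> real" where
  "resample_sum F \<theta> = (\<Sum>j\<in>dom \<theta>. \<Sum>y\<in>UNIV. F (\<theta>(j \<mapsto> y)))"

lemma Dop_Dstar_eq:
  fixes F :: "(nat \<rightharpoonup> 'y::finite) \<Rightarrow> real"
  assumes \<theta>: "\<theta> \<in> Theta n (Suc k)"
  shows "Dop n (Suc (Suc k)) (Dstar n (Suc (Suc k)) F) \<theta>
       = real (card ({1..n} - dom \<theta>)) * real (card (UNIV :: 'y set)) * F \<theta>
         + (\<Sum>x\<in>{1..n} - dom \<theta>. \<Sum>y\<in>UNIV. \<Sum>j\<in>dom \<theta>. F (\<theta>(j := None, x \<mapsto> y)))"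
proof -
  have "Dstar n (Suc (Suc k)) F (\<theta>(x \<mapsto> y)) = F \<theta> + (\<Sum>j\<in>dom \<theta>. F (\<theta>(j := None, x \<mapsto> y)))"
    if x: "x \<in> {1..n} - dom \<theta>" for x y
  proof -
    have "Dstar n (Suc (Suc k)) F (\<theta>(x \<mapsto> y)) = (\<Sum>j\<in>insert x (dom \<theta>). F (\<theta>(x \<mapsto> y, j := None)))"
      using Dstar_Suc_eq[OF fun_upd_Some_in_Theta[OF \<theta>]] x by simp
    also have "\<dots> = F (\<theta>(x \<mapsto> y, x := None)) + (\<Sum>j\<in>dom \<theta>. F (\<theta>(x \<mapsto> y, j := None)))"
      using x Theta_finite_dom[OF \<theta>] by simp
    also have "\<theta>(x \<mapsto> y, x := None) = \<theta>"
      using x by (auto simp: fun_eq_iff domIff)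
    also have "(\<Sum>j\<in>dom \<theta>. F (\<theta>(x \<mapsto> y, j := None))) = (\<Sum>j\<in>dom \<theta>. F (\<theta>(j := None, x \<mapsto> y)))"
    proof (rule sum.cong[OF refl])
      fix j assume "j \<in> dom \<theta>"
      then have "j \<noteq> x" using x by auto
      then show "F (\<theta>(x \<mapsto> y, j := None)) = F (\<theta>(j := None, x \<mapsto> y))"
        by (simp add: fun_upd_twist)
    qed
    finally show ?thesis .
  qed
  then show ?thesis
    using Dop_Suc_eq[OF \<theta>] by (simp add: sum.distrib)
qed

lemma Dstar_Dop_eq:
  fixes F :: "(nat \<rightharpoonup> 'y::finite) \<Rightarrow> real"
  assumes \<theta>: "\<theta> \<in> Theta n (Suc k)"
  shows "Dstar n (Suc k) (Dop n (Suc k) F) \<theta>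
       = resample_sum F \<theta> + (\<Sum>j\<in>dom \<theta>. \<Sum>x\<in>{1..n} - dom \<theta>. \<Sum>y\<in>UNIV. F (\<theta>(j := None, x \<mapsto> y)))"
proof -
  have "Dop n (Suc k) F (\<theta>(j := None))
      = (\<Sum>y\<in>UNIV. F (\<theta>(j \<mapsto> y))) + (\<Sum>x\<in>{1..n} - dom \<theta>. \<Sum>y\<in>UNIV. F (\<theta>(j := None, x \<mapsto> y)))"
    if j: "j \<in> dom \<theta>" for j
  proof -
    have "{1..n} - dom (\<theta>(j := None)) = insert j ({1..n} - dom \<theta>)"
      using j \<theta> by (auto simp: Theta_def)
    then show ?thesis
      using Dop_Suc_eq[OF fun_upd_None_in_Theta[OF \<theta> j]] j by simp
  qed
  then show ?thesis
    using Dstar_Suc_eq[OF \<theta>] by (simp add: resample_sum_def sum.distrib)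
qed

lemma Dop_Dstar_commutator:
  fixes F :: "(nat \<rightharpoonup> 'y::finite) \<Rightarrow> real"
  assumes "\<theta> \<in> Theta n (Suc k)"
  shows "Dop n (Suc (Suc k)) (Dstar n (Suc (Suc k)) F) \<theta> - Dstar n (Suc k) (Dop n (Suc k) F) \<theta>
       = real (card ({1..n} - dom \<theta>)) * real (card (UNIV :: 'y set)) * F \<theta> - resample_sum F \<theta>"
proof -
  have "(\<Sum>j\<in>dom \<theta>. \<Sum>x\<in>{1..n} - dom \<theta>. \<Sum>y\<in>UNIV. F (\<theta>(j := None, x \<mapsto> y)))
      = (\<Sum>x\<in>{1..n} - dom \<theta>. \<Sum>y\<in>UNIV. \<Sum>j\<in>dom \<theta>. F (\<theta>(j := None, x \<mapsto> y)))"
    by (subst sum.swap) (simp add: sum.swap[where A = "dom \<theta>"])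
  then show ?thesis
    using Dop_Dstar_eq[OF assms, of F] Dstar_Dop_eq[OF assms, of F] by simp
qed

lemma eigsp_1_constant:
  fixes Q :: "'y::finite \<Rightarrow> 'y \<Rightarrow> real"
  assumes st: "stochastic_mat Q" and ir: "irreducible_mat Q" and f: "f \<in> eigsp Q 1"
  shows "\<exists>c. f = (\<lambda>_. c)"
proof -
  define M where "M = Max (range f)"
  have le_M: "f w \<le> M" for w
    unfolding M_def by (rule Max_ge) auto
  obtain y0 where y0: "f y0 = M"
  proof -
    have "M \<in> range f" unfolding M_def by (rule Max_in) auto
    then show ?thesis using that by auto
  qed
  txt \<open>Maximum principle: \<open>f u\<close> is a weighted average of the \<open>f v\<close>, so \<open>M\<close> spreads along positive transitions.\<close>
  have step: "f v = M" if u: "f u = M" and q: "Q u v > 0" for u v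
  proof -
    have "(\<Sum>w\<in>UNIV. Q u w * (M - f w)) = (\<Sum>w\<in>UNIV. Q u w) * M - (\<Sum>w\<in>UNIV. Q u w * f w)"
      by (simp add: right_diff_distrib sum_subtractf sum_distrib_right)
    also have "\<dots> = 0"
      using st f u by (simp add: stochastic_mat_def eigsp_def Qop_def fun_eq_iff)
    finally have "Q u v * (M - f v) = 0"
      using st le_M by (subst (asm) sum_nonneg_eq_0_iff) (auto simp: stochastic_mat_def)
    then show ?thesis using q by simp
  qed
  have "f w = M" for w
  proof -
    have "(y0, w) \<in> {(u, v). Q u v > 0}\<^sup>*"
      using ir by (simp add: irreducible_mat_def)
    then show ?thesis
      by (induction rule: rtrancl_induct) (use y0 step in auto)
  qed
  then show ?thesis by blast
qed

text \<open>Symmetry makes Q doubly stochastic, so summing the eigen-equation over Y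
  gives \<open>c * sum f = sum f\<close>.\<close>
lemma sum_eigsp_eq_0:
  fixes Q :: "'y::finite \<Rightarrow> 'y \<Rightarrow> real"
  assumes sy: "symmetric_mat Q" and st: "stochastic_mat Q"
    and f: "f \<in> eigsp Q c" and c: "c \<noteq> 1"
  shows "(\<Sum>y\<in>UNIV. f y) = 0"
proof -
  have "c * (\<Sum>y\<in>UNIV. f y) = (\<Sum>y\<in>UNIV. \<Sum>w\<in>UNIV. Q y w * f w)"
    using f by (simp add: eigsp_def Qop_def fun_eq_iff sum_distrib_left)
  also have "\<dots> = (\<Sum>w\<in>UNIV. (\<Sum>y\<in>UNIV. Q w y) * f w)"
    using sy by (subst sum.swap) (simp add: sum_distrib_right symmetric_mat_def)
  also have "\<dots> = (\<Sum>y\<in>UNIV. f y)"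
    using st by (simp add: stochastic_mat_def)
  finally show ?thesis using c by (metis mult_cancel_right1)
qed

lemma tensor_split:
  assumes "dom \<theta> = A" "finite A" "j \<in> A"
  shows "tensor A Fs \<theta> = Fs j (the (\<theta> j)) * (\<Prod>i\<in>A - {j}. Fs i (the (\<theta> i)))"
  using assms by (simp add: tensor_def prod.remove)

lemma sum_tensor_fun_upd:
  assumes "dom \<theta> = A" "finite A" "j \<in> A"
  shows "(\<Sum>y\<in>UNIV. tensor A Fs (\<theta>(j \<mapsto> y)))
       = (\<Sum>y\<in>UNIV. Fs j y) * (\<Prod>i\<in>A - {j}. Fs i (the (\<theta> i)))"
proof -
  have "tensor A Fs (\<theta>(j \<mapsto> y)) = Fs j y * (\<Prod>i\<in>A - {j}. Fs i (the (\<theta> i)))" for y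
  proof -
    have "(\<Prod>i\<in>A - {j}. Fs i (the ((\<theta>(j \<mapsto> y)) i))) = (\<Prod>i\<in>A - {j}. Fs i (the (\<theta> i)))"
      by (intro prod.cong) auto
    then show ?thesis
      using tensor_split[of "\<theta>(j \<mapsto> y)" A j Fs] assms by (simp add: insert_absorb)
  qed
  then show ?thesis by (simp add: sum_distrib_right)
qed

lemma fundamental_eq_0_outside:
  "fundamental Q lam m b A G \<Longrightarrow> dom \<theta> \<noteq> A \<Longrightarrow> G \<theta> = 0"
  unfolding fundamental_def tensor_def by (elim exE conjE) simp

lemma resample_sum_fundamental:
  fixes Q :: "'y::finite \<Rightarrow> 'y \<Rightarrow> real"
  assumes sy: "symmetric_mat Q" and st: "stochastic_mat Q" and ir: "irreducible_mat Q"
    and lam0: "lam 0 = 1" and inj: "inj_on lam {..m}" and A: "finite A"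
    and G: "fundamental Q lam m b A G"
  shows "resample_sum G \<theta> = real (card (UNIV :: 'y set)) * real (b 0) * G \<theta>"
proof (cases "dom \<theta> = A")
  case False
  then show ?thesis
    using fundamental_eq_0_outside[OF G] by (simp add: resample_sum_def insert_absorb)
next
  case dom: True
  obtain Fs idx where Fs: "\<forall>j\<in>A. idx j \<le> m \<and> Fs j \<in> eigsp Q (lam (idx j))"
    and card: "\<forall>i\<le>m. card {j\<in>A. idx j = i} = b i" and G_eq: "G = tensor A Fs"
    using G unfolding fundamental_def by blast
  have slot: "(\<Sum>y\<in>UNIV. G (\<theta>(j \<mapsto> y)))
      = (if idx j = 0 then real (card (UNIV :: 'y set)) * G \<theta> else 0)" if j: "j \<in> A" for j
  proof (cases "idx j = 0")
    case True
    then have "Fs j \<in> eigsp Q 1" using Fs j lam0 by auto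
    then obtain c where "Fs j = (\<lambda>_. c)"
      using eigsp_1_constant[OF st ir] by blast
    then have "(\<Sum>y\<in>UNIV. Fs j y) = real (card (UNIV :: 'y set)) * Fs j (the (\<theta> j))"
      by simp
    then show ?thesis
      using True G_eq sum_tensor_fun_upd[OF dom A j] tensor_split[OF dom A j] by simp
  next
    case False
    have "lam (idx j) \<noteq> 1"
      using False Fs j inj lam0 by (metis atMost_iff inj_on_eq_iff le0)
    then have "(\<Sum>y\<in>UNIV. Fs j y) = 0"
      using sum_eigsp_eq_0[OF sy st] Fs j by blast
    then show ?thesis
      using False G_eq sum_tensor_fun_upd[OF dom A j] by simp
  qed
  have "resample_sum G \<theta> = (\<Sum>j\<in>A. if idx j = 0 then real (card (UNIV :: 'y set)) * G \<theta> else 0)"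
    unfolding resample_sum_def dom using slot by simp
  also have "\<dots> = real (card (UNIV :: 'y set)) * real (card {j\<in>A. idx j = 0}) * G \<theta>"
    using A by (simp add: sum.If_cases Int_def)
  finally show ?thesis using card by simp
qed

lemma resample_sum_lincomb:
  "resample_sum (\<lambda>\<theta>. \<Sum>G\<in>S. c G * G \<theta>) \<theta> = (\<Sum>G\<in>S. c G * resample_sum G \<theta>)"
  unfolding resample_sum_def sum_distrib_left
  by (subst sum.swap) (simp add: sum.swap[where A = S])

lemma Pspace_eq_0_outside:
  assumes "F \<in> Pspace Q lam m b A" "dom \<theta> \<noteq> A"
  shows "F \<theta> = 0"
proof -
  obtain S c where S: "S \<subseteq> {G. fundamental Q lam m b A G}" and F: "F = (\<lambda>\<theta>. \<Sum>G\<in>S. c G * G \<theta>)"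
    using assms(1) unfolding Pspace_def by blast
  have "\<forall>G\<in>S. G \<theta> = 0"
    using S fundamental_eq_0_outside[OF _ assms(2)] by blast
  then show ?thesis using F by (simp add: sum.neutral)
qed

lemma resample_sum_Pspace:
  fixes Q :: "'y::finite \<Rightarrow> 'y \<Rightarrow> real"
  assumes "symmetric_mat Q" "stochastic_mat Q" "irreducible_mat Q"
    and "lam 0 = 1" "inj_on lam {..m}" "finite A"
    and "F \<in> Pspace Q lam m b A"
  shows "resample_sum F \<theta> = real (card (UNIV :: 'y set)) * real (b 0) * F \<theta>"
proof -
  obtain S c where "S \<subseteq> {G. fundamental Q lam m b A G}" and F: "F = (\<lambda>\<theta>. \<Sum>G\<in>S. c G * G \<theta>)"
    using assms(7) unfolding Pspace_def by blast
  then have "resample_sum F \<theta> = (\<Sum>G\<in>S. c G * (real (card (UNIV :: 'y set)) * real (b 0) * G \<theta>))"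
    using resample_sum_fundamental[OF assms(1-6)] by (auto simp: resample_sum_lincomb intro!: sum.cong)
  then show ?thesis
    using F by (simp add: sum_distrib_left mult_ac)
qed

theorem corollary7p6:
  fixes Q :: "'y::finite \<Rightarrow> 'y \<Rightarrow> real"
    and lam :: "nat \<Rightarrow> real" and m n k :: nat and a :: "nat \<Rightarrow> nat"
    and A :: "nat set" and F :: "(nat \<rightharpoonup> 'y) \<Rightarrow> real"
  assumes "symmetric_mat Q" and "stochastic_mat Q" and "irreducible_mat Q"
    and "lam 0 = 1" and "inj_on lam {..m}"
    and "lam ` {..m} = {\<mu>. is_eigenvalue Q \<mu>}"
    and "2 \<le> k" and "k \<le> n - 1"
    and "(\<Sum>i\<le>m. a i) = k + 1" and "a 0 \<ge> 1"
    and "A \<subseteq> {1..n}" and "card A = k"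
    and "F \<in> Pspace Q lam m (a(0 := a 0 - 1)) A"
  shows "(\<lambda>\<theta>. Dop n (k + 1) (Dstar n (k + 1) F) \<theta> - Dstar n k (Dop n k F) \<theta>)
       = (\<lambda>\<theta>. real (card (UNIV :: 'y set)) * (real n + real (ell m a) - 2 * real k) * F \<theta>)"
proof
  fix \<theta>
  obtain k' where k': "k = Suc k'" using assms(7) by (cases k) auto
  have "a 0 + ell m a = k + 1"
    using assms(9) by (simp add: ell_def atMost_atLeast0 sum.atLeast_Suc_atMost)
  then have coeff: "real (n - k) - real (a 0 - 1) = real n + real (ell m a) - 2 * real k"
    using assms(7,8,10) by linarith
  show "Dop n (k + 1) (Dstar n (k + 1) F) \<theta> - Dstar n k (Dop n k F) \<theta>
       = real (card (UNIV :: 'y set)) * (real n + real (ell m a) - 2 * real k) * F \<theta>"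
  proof (cases "\<theta> \<in> Theta n k")
    case True
    have "card ({1..n} - dom \<theta>) = n - k"
      using True by (simp add: Theta_def card_Diff_subset Theta_finite_dom[OF True])
    moreover have "resample_sum F \<theta> = real (card (UNIV :: 'y set)) * real (a 0 - 1) * F \<theta>"
      using resample_sum_Pspace[OF assms(1-5) finite_subset[OF assms(11)] assms(13)] by simp
    ultimately have "Dop n (k + 1) (Dstar n (k + 1) F) \<theta> - Dstar n k (Dop n k F) \<theta>
        = real (card (UNIV :: 'y set)) * (real (n - k) - real (a 0 - 1)) * F \<theta>"
      using Dop_Dstar_commutator[of \<theta> n k' F] True k' by (simp add: algebra_simps)
    then show ?thesis
      unfolding coeff .
  next
    case False
    then have "dom \<theta> \<noteq> A" using assms(11,12) by (auto simp: Theta_def)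
    then show ?thesis
      using False Pspace_eq_0_outside[OF assms(13)] by (simp add: Dop_def Dstar_def)
  qed
qed

end
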